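(* Let $\omega>0$, $\bar r>0$, $\bar v>0$ and $T>0$ be such that $e^{AT}\begin{bmatrix}-\bar r\\ \bar v\end{bmatrix}=\begin{bmatrix}\bar r\\ \bar v\end{bmatrix}$, where $A=\begin{bmatrix}0&1\\ \omega^2&0\end{bmatrix}$. Consider the hybrid system with state $(x,\tau)$, $x=(x_p,x_v)\in\mathbb R^2$, $\tau\in\mathbb R$, input $u\in\mathbb R$ and $B=\begin{bmatrix}0\\-\omega^2\end{bmatrix}$: flow: $\dot x=Ax+Bu$, $\dot\tau=1$, for $(x,\tau)\in\mathcal C\times[-T,2T]$; jump: $x^+=x+\begin{bmatrix}-2\bar r\\0\end{bmatrix}$, $\tau^+=\tau-T$, for $(x,\tau)\in\mathcal D\times[-T,2T]$, where $\mathcal C=[-\bar r,\bar r]\times\mathbb R$ and $\mathcal D=\{x\in\mathcal C: x_p=\bar r\}$. Define $x_r(\tau)=e^{A\tau}\begin{bmatrix}-\bar r\\ \bar v\end{bmatrix}$, the error $\varepsilon=(\varepsilon_p,\varepsilon_v)=x-x_r(\tau)$, and $\tau_\varepsilon=T-\tau$. Then $\bar v/\omega-\bar r>0$, and whenever a solution of this hybrid system is at a point $(x,\tau)$ with $x\in\mathcal D$, it holds that $$\tau_\varepsilon=\frac1\omega\ln\big(\eta(\varepsilon_p)\big),\qquad \eta(\varepsilon_p):=\frac{\varepsilon_p-\bar r+\sqrt{\varepsilon_p^2-2\bar r\varepsilon_p+(\bar v/\omega)^2}}{\bar v/\omega-\bar r}.$$ Moreover, $\varepsilon_p\mapsto\frac1\omega\ln(\eta(\varepsilon_p))$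 is an extended class $\mathcal K_\infty$ function on $\mathbb R$; equivalently, $\eta(0)=1$, $\eta$ is strictly increasing, $\lim_{\varepsilon_p\to+\infty}\eta(\varepsilon_p)=+\infty$ and $\lim_{\varepsilon_p\to-\infty}\eta(\varepsilon_p)=0$.
   Context: An extended class $\mathcal K_\infty$ function is a function $\mathbb R\to\mathbb R$ that is continuous, strictly increasing, zero at zero, and unbounded both above and below (tends to $+\infty$ at $+\infty$ and to $-\infty$ at $-\infty$). Solutions of the hybrid system are understood in the standard hybrid-time-domain sense (Goebel–Sanfelice–Teel). *)

theory Defs
  imports "HOL-Analysis.Analysis"
begin

fun matpow :: "real^'n^'n \<Rightarrow> nat \<Rightarrow> real^'n^'n" where
  "matpow M 0 = mat 1"
| "matpow M (Suc k) = M ** matpow M k"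

definition mexp :: "real^'n^'n \<Rightarrow> real^'n^'n" where
  "mexp M = (\<Sum>k. (1 / fact k) *\<^sub>R matpow M k)"

text \<open>The matrix A = [[0,1],[omega^2,0]] (given by rows) and B = [0; -omega^2].\<close>
definition Amat :: "real \<Rightarrow> real^2^2" where
  "Amat \<omega> = vector [vector [0, 1], vector [\<omega>^2, 0]]"

definition Bvec :: "real \<Rightarrow> real^2" where
  "Bvec \<omega> = vector [0, - (\<omega>^2)]"

definition Cset :: "real \<Rightarrow> (real^2) set" where
  "Cset rb = {x. x$1 \<in> {-rb..rb}}"

definition Dset :: "real \<Rightarrow> (real^2) set" where
  "Dset rb = {x. x \<in> Cset rb \<and> x$1 = rb}"

definition xref :: "real \<Rightarrow> real \<Rightarrow> real \<Rightarrow> real \<Rightarrow> real^2" where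
  "xref \<omega> rb vb \<tau> = mexp (\<tau> *\<^sub>R Amat \<omega>) *v vector [- rb, vb]"

definition eta :: "real \<Rightarrow> real \<Rightarrow> real \<Rightarrow> real \<Rightarrow> real" where
  "eta \<omega> rb vb e =
     (e - rb + sqrt (e^2 - 2 * rb * e + (vb / \<omega>)^2)) / (vb / \<omega> - rb)"

definition ext_class_Kinf :: "(real \<Rightarrow> real) \<Rightarrow> bool" where
  "ext_class_Kinf f \<longleftrightarrow> continuous_on UNIV f \<and> strict_mono f \<and> f 0 = 0
     \<and> filterlim f at_top at_top \<and> filterlim f at_bot at_bot"

end

theory Submission
  imports Defs
begin

text \<open>Since \<open>A\<^sup>2 = \<omega>\<^sup>2 I\<close>, the exponential is \<open>exp(t A) = cosh(\<omega> t) I + (sinh(\<omega> t) / \<omega>) A\<close>.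
  With \<open>c = v / \<omega>\<close>, the velocity component of the periodicity condition forces \<open>c > r\<close> and
  \<open>exp(\<omega> T) = (c + r) / (c - r)\<close>. The function \<open>\<eta>\<close> is the inverse of the increasing bijection
  \<open>\<phi>(y) = r + ((c - r) y - (c + r) / y) / 2\<close> from \<open>(0, \<infinity>)\<close> onto \<open>\<real>\<close>, which gives its
  monotonicity and limits; and on the jump set the position error is exactly \<open>\<phi>(exp(\<omega> (T - \<tau>)))\<close>,
  so that \<open>\<eta>(\<epsilon>\<^sub>p) = exp(\<omega> (T - \<tau>))\<close>.\<close>

lemma matpow_scaleR: "matpow (t *\<^sub>R M) k = t ^ k *\<^sub>R matpow M k"
  by (induction k) (simp_all add: matrix_scalar_ac scalar_matrix_assoc mult.commute)

lemma matpow_of_square_eq_scalar: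
  fixes M :: "real^'n^'n"
  assumes "M ** M = (w^2) *\<^sub>R mat 1"
  shows "matpow M k = (if even k then w ^ k *\<^sub>R mat 1 else w ^ (k - 1) *\<^sub>R M)"
proof (induction k)
  case (Suc k)
  show ?case
  proof (cases "even k")
    case True
    then show ?thesis using Suc by (simp add: matrix_scalar_ac)
  next
    case False
    then obtain j where "k = Suc (2 * j)" by (metis oddE Suc_eq_plus1)
    then show ?thesis using Suc assms
      by (simp add: matrix_scalar_ac scalar_matrix_assoc[symmetric] power_mult power2_eq_square)
  qed
qed simp

lemma mexp_scaleR_of_square_eq_scalar:
  fixes M :: "real^'n^'n"
  assumes sq: "M ** M = (w^2) *\<^sub>R mat 1" and "w \<noteq> 0"
  shows "mexp (t *\<^sub>R M) = cosh (t * w) *\<^sub>R mat 1 + (sinh (t * w) / w) *\<^sub>R M"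
proof -
  let ?ch = "\<lambda>k. if even k then (t * w) ^ k /\<^sub>R fact k else 0"
  let ?sh = "\<lambda>k. if even k then 0 else (t * w) ^ k /\<^sub>R fact k"
  have term_eq: "(1 / fact k) *\<^sub>R matpow (t *\<^sub>R M) k = ?ch k *\<^sub>R mat 1 + (?sh k / w) *\<^sub>R M" for k
  proof (cases "even k")
    case False
    then obtain j where "k = Suc j" by (cases k) auto
    then have "t ^ k * w ^ (k - 1) = (t * w) ^ k / w"
      using \<open>w \<noteq> 0\<close> by (simp add: power_mult_distrib)
    with False show ?thesis
      by (simp add: matpow_scaleR matpow_of_square_eq_scalar[OF sq] field_simps)
  qed (simp add: matpow_scaleR matpow_of_square_eq_scalar[OF sq] power_mult_distrib field_simps)
  have "(\<lambda>k. ?ch k *\<^sub>R mat 1 + (?sh k / w) *\<^sub>R M) sums (cosh (t * w) *\<^sub>R mat 1 + (sinh (t * w) / w) *\<^sub>R M)"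
    by (intro sums_add sums_scaleR_left sums_divide cosh_converges sinh_converges)
  then show ?thesis
    unfolding mexp_def term_eq by (rule sums_unique[symmetric])
qed

lemma Amat_square: "Amat \<omega> ** Amat \<omega> = (\<omega>^2) *\<^sub>R mat 1"
  by (simp add: vec_eq_iff forall_2 matrix_matrix_mult_def sum_2 Amat_def mat_def)

lemma mexp_Amat_mult_vector:
  assumes "\<omega> \<noteq> 0"
  shows "mexp (t *\<^sub>R Amat \<omega>) *v vector [a, b] =
    vector [a * cosh (t * \<omega>) + b * sinh (t * \<omega>) / \<omega>, b * cosh (t * \<omega>) + a * \<omega> * sinh (t * \<omega>)]"
  unfolding mexp_scaleR_of_square_eq_scalar[OF Amat_square assms]
  by (simp add: vec_eq_iff forall_2 matrix_vector_mult_def sum_2 Amat_def mat_def power2_eq_square)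

lemma exp_eq_of_cosh_sinh_fixed:
  fixes c r s :: real
  assumes "0 < r" and "0 < s" and fixed: "c * cosh s - r * sinh s = c"
  shows "r < c" and "exp s = (c + r) / (c - r)"
proof -
  define E where "E = exp s"
  have "E > 1" unfolding E_def using \<open>0 < s\<close> by simp
  have "E * E + 1 = 2 * E * cosh s" and "E * E - 1 = 2 * E * sinh s"
    unfolding E_def cosh_def sinh_def by (simp_all add: exp_minus field_simps)
  then have "c * (E * E + 1) - r * (E * E - 1) = 2 * E * (c * cosh s - r * sinh s)"
    by (simp add: algebra_simps)
  also have "\<dots> = 2 * E * c" by (simp add: fixed)
  finally have "c * (E - 1) * (E - 1) = r * (E + 1) * (E - 1)"
    by (simp add: algebra_simps)
  with \<open>E > 1\<close> have key: "c * (E - 1) = r * (E + 1)" by simp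
  with \<open>E > 1\<close> \<open>0 < r\<close> have "r * (E - 1) < c * (E - 1)" by simp
  with \<open>E > 1\<close> show "r < c" by simp
  with key show "exp s = (c + r) / (c - r)"
    unfolding E_def[symmetric] by (simp add: field_simps)
qed

locale eta_setting =
  fixes \<omega> rb vb :: real
  assumes omega_pos: "0 < \<omega>" and rb_pos: "0 < rb" and rb_less: "rb < vb / \<omega>"
begin

definition c :: real where "c = vb / \<omega>"

lemma rb_less_c: "rb < c"
  using rb_less by (simp add: c_def)

lemma eta_eq: "eta \<omega> rb vb e = (e - rb + sqrt ((e - rb)^2 + (c^2 - rb^2))) / (c - rb)"
  unfolding eta_def c_def by (simp add: power2_eq_square algebra_simps)

lemma c_sq_minus_rb_sq_pos: "0 < c^2 - rb^2"
  using rb_pos rb_less_c by (simp add: power_strict_mono)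

lemma abs_less_eta_sqrt: "\<bar>e - rb\<bar> < sqrt ((e - rb)^2 + (c^2 - rb^2))"
  using real_sqrt_less_mono[of "(e - rb)^2" "(e - rb)^2 + (c^2 - rb^2)"] c_sq_minus_rb_sq_pos by simp

lemma eta_pos: "0 < eta \<omega> rb vb e"
  unfolding eta_eq using abs_less_eta_sqrt[of e] rb_less_c by (intro divide_pos_pos) auto

definition eta_inverse :: "real \<Rightarrow> real" where
  "eta_inverse y = rb + ((c - rb) * y - (c + rb) / y) / 2"

lemma eta_inverse_eta: "eta_inverse (eta \<omega> rb vb e) = e"
proof -
  define S where "S = sqrt ((e - rb)^2 + (c^2 - rb^2))"
  have "0 < S + (e - rb)"
    using abs_less_eta_sqrt[of e] unfolding S_def by auto
  have "S^2 = (e - rb)^2 + (c^2 - rb^2)"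
    using c_sq_minus_rb_sq_pos unfolding S_def by (simp add: add_nonneg_pos)
  then have product: "(c + rb) * (c - rb) = (S + (e - rb)) * (S - (e - rb))"
    by (simp add: algebra_simps power2_eq_square)
  have eta_S: "eta \<omega> rb vb e = (S + (e - rb)) / (c - rb)"
    unfolding eta_eq S_def by simp
  then have "(c - rb) * eta \<omega> rb vb e = S + (e - rb)"
    using rb_less_c by simp
  moreover have "(c + rb) / eta \<omega> rb vb e = S - (e - rb)"
    unfolding eta_S using rb_less_c \<open>0 < S + (e - rb)\<close> by (simp add: product)
  ultimately show ?thesis
    unfolding eta_inverse_def by (simp add: field_simps)
qed

lemma eta_eta_inverse:
  assumes "0 < y"
  shows "eta \<omega> rb vb (eta_inverse y) = y"
proof -
  let ?d = "eta_inverse y - rb"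
  have "?d^2 + (c^2 - rb^2) = (((c - rb) * y + (c + rb) / y) / 2)^2"
    unfolding eta_inverse_def using assms by (simp add: field_simps power2_eq_square)
  moreover have "0 \<le> (c - rb) * y + (c + rb) / y"
    using assms rb_pos rb_less_c by simp
  ultimately have "sqrt (?d^2 + (c^2 - rb^2)) = ((c - rb) * y + (c + rb) / y) / 2"
    by simp
  then show ?thesis
    unfolding eta_eq using rb_less_c by (simp add: eta_inverse_def field_simps)
qed

lemma eta_inverse_mono:
  assumes "0 < y" and "y \<le> z"
  shows "eta_inverse y \<le> eta_inverse z"
proof -
  have "(c + rb) / z \<le> (c + rb) / y"
    using assms rb_pos rb_less_c by (intro divide_left_mono) auto
  moreover have "(c - rb) * y \<le> (c - rb) * z"
    using assms rb_less_c by simp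
  ultimately have "(c - rb) * y - (c + rb) / y \<le> (c - rb) * z - (c + rb) / z"
    by linarith
  then show ?thesis
    unfolding eta_inverse_def by (intro add_left_mono divide_right_mono) simp_all
qed

lemma strict_mono_eta: "strict_mono (eta \<omega> rb vb)"
proof (rule strict_monoI)
  fix a b :: real
  assume "a < b"
  show "eta \<omega> rb vb a < eta \<omega> rb vb b"
  proof (rule ccontr)
    assume "\<not> ?thesis"
    then have "eta_inverse (eta \<omega> rb vb b) \<le> eta_inverse (eta \<omega> rb vb a)"
      by (intro eta_inverse_mono eta_pos) simp
    with \<open>a < b\<close> show False
      unfolding eta_inverse_eta by simp
  qed
qed

lemma eta_zero: "eta \<omega> rb vb 0 = 1"
proof -
  have "sqrt ((0 - rb)^2 + (c^2 - rb^2)) = c"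
    using rb_pos rb_less_c by simp
  then show ?thesis
    unfolding eta_eq using rb_less_c by simp
qed

lemma eta_ge_iff:
  assumes "0 < y"
  shows "y \<le> eta \<omega> rb vb e \<longleftrightarrow> eta_inverse y \<le> e"
  using strict_mono_less_eq[OF strict_mono_eta, of "eta_inverse y" e] eta_eta_inverse[OF assms]
  by simp

lemma filterlim_eta_at_top: "filterlim (eta \<omega> rb vb) at_top at_top"
  unfolding filterlim_at_top_gt[where c = 0]
proof (intro allI impI)
  fix y :: real
  assume "0 < y"
  then show "\<forall>\<^sub>F e in at_top. y \<le> eta \<omega> rb vb e"
    unfolding eta_ge_iff[OF \<open>0 < y\<close>] by simp
qed

lemma tendsto_eta_at_bot: "(eta \<omega> rb vb \<longlongrightarrow> 0) at_bot"
proof (rule order_tendstoI)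
  fix y :: real
  assume "y < 0"
  then show "\<forall>\<^sub>F e in at_bot. y < eta \<omega> rb vb e"
    using eta_pos by (simp add: less_trans)
next
  fix y :: real
  assume "0 < y"
  have "eta \<omega> rb vb e < y" if "e < eta_inverse y" for e
    using eta_ge_iff[OF \<open>0 < y\<close>, of e] that by linarith
  then show "\<forall>\<^sub>F e in at_bot. eta \<omega> rb vb e < y"
    by (auto intro: eventually_mono[OF eventually_gt_at_bot])
qed

lemma continuous_on_eta: "continuous_on UNIV (eta \<omega> rb vb)"
  unfolding eta_def using rb_less by (intro continuous_intros) auto

lemma ext_class_Kinf_ln_eta: "ext_class_Kinf (\<lambda>e. (1 / \<omega>) * ln (eta \<omega> rb vb e))"
  unfolding ext_class_Kinf_def
proof (intro conjI)
  show "continuous_on UNIV (\<lambda>e. 1 / \<omega> * ln (eta \<omega> rb vb e))"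
    using eta_pos by (intro continuous_intros continuous_on_eta) (auto simp: less_imp_neq[symmetric])
  show "strict_mono (\<lambda>e. 1 / \<omega> * ln (eta \<omega> rb vb e))"
    using strict_mono_eta eta_pos omega_pos by (simp add: strict_mono_def divide_strict_right_mono)
  show "1 / \<omega> * ln (eta \<omega> rb vb 0) = 0"
    by (simp add: eta_zero)
  show "LIM e at_top. 1 / \<omega> * ln (eta \<omega> rb vb e) :> at_top"
    using omega_pos
    by (intro filterlim_tendsto_pos_mult_at_top[OF tendsto_const]
        filterlim_compose[OF ln_at_top filterlim_eta_at_top]) auto
  have "filterlim (eta \<omega> rb vb) (at_right 0) at_bot"
    using tendsto_eta_at_bot eta_pos by (intro tendsto_imp_filterlim_at_right) auto
  then show "LIM e at_bot. 1 / \<omega> * ln (eta \<omega> rb vb e) :> at_bot"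
    using omega_pos
    by (intro filterlim_tendsto_pos_mult_at_bot[OF tendsto_const] filterlim_compose[OF ln_at_0]) auto
qed

lemma eta_jump_position_error:
  assumes "exp (T * \<omega>) = (c + rb) / (c - rb)"
  shows "eta \<omega> rb vb (rb + rb * cosh (\<tau> * \<omega>) - c * sinh (\<tau> * \<omega>)) = exp ((T - \<tau>) * \<omega>)"
proof -
  define s where "s = exp (\<tau> * \<omega>)"
  define y where "y = exp ((T - \<tau>) * \<omega>)"
  have "0 < s" and "0 < y" unfolding s_def y_def by simp_all
  have "y = (c + rb) / ((c - rb) * s)"
    unfolding y_def s_def using assms by (simp add: left_diff_distrib exp_diff)
  then have "(c - rb) * s * y = c + rb"
    using \<open>0 < s\<close> rb_less_c by (simp add: field_simps)
  then have "(c - rb) * y = (c + rb) / s" and "(c + rb) / y = (c - rb) * s"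
    using \<open>0 < s\<close> \<open>0 < y\<close> by (simp_all add: field_simps)
  moreover have "rb * cosh (\<tau> * \<omega>) - c * sinh (\<tau> * \<omega>) = ((c + rb) / s - (c - rb) * s) / 2"
    unfolding s_def cosh_def sinh_def by (simp add: exp_minus field_simps)
  ultimately have "rb + rb * cosh (\<tau> * \<omega>) - c * sinh (\<tau> * \<omega>) = eta_inverse y"
    unfolding eta_inverse_def by simp
  then show ?thesis
    using eta_eta_inverse[OF \<open>0 < y\<close>] by (simp add: y_def)
qed

end

theorem proposition1:
  fixes \<omega> rb vb T :: real
  assumes "\<omega> > 0" and "rb > 0" and "vb > 0" and "T > 0"
    and "mexp (T *\<^sub>R Amat \<omega>) *v vector [- rb, vb] = vector [rb, vb]"
  shows "vb / \<omega> - rb > 0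
    \<and> (\<forall>x \<tau>. x \<in> Dset rb \<and> \<tau> \<in> {-T..2*T} \<longrightarrow>
         (let \<epsilon> = x - xref \<omega> rb vb \<tau> in
            T - \<tau> = (1 / \<omega>) * ln (eta \<omega> rb vb (\<epsilon>$1))))
    \<and> ext_class_Kinf (\<lambda>e. (1 / \<omega>) * ln (eta \<omega> rb vb e))
    \<and> eta \<omega> rb vb 0 = 1
    \<and> strict_mono (eta \<omega> rb vb)
    \<and> filterlim (eta \<omega> rb vb) at_top at_top
    \<and> ((eta \<omega> rb vb) \<longlongrightarrow> 0) at_bot"
proof -
  have "vb * cosh (T * \<omega>) - rb * \<omega> * sinh (T * \<omega>) = vb"
    using arg_cong[OF assms(5), of "\<lambda>x. x $ 2"] \<open>\<omega> > 0\<close> by (simp add: mexp_Amat_mult_vector)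
  then have "vb / \<omega> * cosh (T * \<omega>) - rb * sinh (T * \<omega>) = vb / \<omega>"
    using \<open>\<omega> > 0\<close> by (simp add: field_simps)
  from exp_eq_of_cosh_sinh_fixed[OF \<open>rb > 0\<close> mult_pos_pos[OF \<open>T > 0\<close> \<open>\<omega> > 0\<close>] this]
  have "rb < vb / \<omega>" and period: "exp (T * \<omega>) = (vb / \<omega> + rb) / (vb / \<omega> - rb)" .
  interpret eta_setting \<omega> rb vb
    using \<open>\<omega> > 0\<close> \<open>rb > 0\<close> \<open>rb < vb / \<omega>\<close> by unfold_locales
  have "T - \<tau> = (1 / \<omega>) * ln (eta \<omega> rb vb ((x - xref \<omega> rb vb \<tau>) $ 1))"
    if "x \<in> Dset rb" for x \<tau>
  proof -
    have "(x - xref \<omega> rb vb \<tau>) $ 1 = rb + rb * cosh (\<tau> * \<omega>) - c * sinh (\<tau> * \<omega>)"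
      using that \<open>\<omega> > 0\<close> by (simp add: Dset_def xref_def mexp_Amat_mult_vector c_def)
    then show ?thesis
      using eta_jump_position_error[of T \<tau>] period \<open>\<omega> > 0\<close> by (simp add: c_def)
  qed
  then show ?thesis
    using \<open>rb < vb / \<omega>\<close> ext_class_Kinf_ln_eta eta_zero strict_mono_eta
      filterlim_eta_at_top tendsto_eta_at_bot
    by (simp add: Let_def)
qed

end
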